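(* Let $s=2$ and consider problem (P) in the context, which has the single variable $I_1=P_2$ (with $P_1=P_{\max}-P_2$). Then the optimal power allocation $(P_1^{**},P_2^{**})$ satisfies: 1. if $\alpha_1<\beta_1$, then $P_1^{**}=P_{\max}$ (so $P_2^{**}=0$); 2. if $h_2\beta_1<h_0\alpha_1$, then $P_2^{**}=P_{\max}$; 3. if $\alpha_1>\beta_1$ and $h_2\beta_1>h_0\alpha_1$, then $P_2^{**}=\min(r_1,P_{\max})$, where $r_1:=\frac{\alpha_1-\beta_1}{h_2\beta_1-h_0\alpha_1}$.
   Context: Parameters: - $P_{\max}>0$ and positive reals $h_0<h_1<h_2$. - Probabilities $\delta_0,\delta_1,\delta_2$ summing to $1$. - $\theta_1=\delta_0$, $\theta_2=\delta_0+\delta_1$, and $\Delta_k=\theta_k(1-\theta_k)$. - $\alpha_1:=(h_2-h_1)\Delta_2$ and $\beta_1:=(h_1-h_0)\Delta_1$. Problem (P). Over $P_1,P_2\ge0$ with $P_1+P_2=P_{\max}$, maximize $\Delta_1LR_1+\Delta_2LR_2$, where - $R_1=\frac12\big[\log\big(1+\frac{h_1P_1}{1+h_1P_2}\big)-\log\big(1+\frac{h_0P_1}{1+h_0P_2}\big)\big]$, - $R_2=\frac12\big[\log(1+h_2P_2)-\log(1+h_1P_2)\big]$. *)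

theory Defs
  imports Complex_Main
begin

text \<open>Rates of problem (P); log is the natural logarithm (the base only rescales the objective).\<close>

definition R1 :: "real \<Rightarrow> real \<Rightarrow> real \<Rightarrow> real \<Rightarrow> real" where
  "R1 h0 h1 P1 P2 = (1/2) * (ln (1 + h1 * P1 / (1 + h1 * P2)) - ln (1 + h0 * P1 / (1 + h0 * P2)))"

definition R2 :: "real \<Rightarrow> real \<Rightarrow> real \<Rightarrow> real" where
  "R2 h1 h2 P2 = (1/2) * (ln (1 + h2 * P2) - ln (1 + h1 * P2))"

definition Dlt :: "real \<Rightarrow> real" where
  "Dlt \<theta> = \<theta> * (1 - \<theta>)"

text \<open>Objective of (P): Delta_1 L R_1 + Delta_2 L R_2 with theta_1 = d0, theta_2 = d0 + d1.\<close>
definition objP :: "real \<Rightarrow> real \<Rightarrow> real \<Rightarrow> real \<Rightarrow> real \<Rightarrow> real \<Rightarrow> real \<Rightarrow> real \<Rightarrow> real" where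
  "objP L h0 h1 h2 d0 d1 P1 P2 =
     Dlt d0 * L * R1 h0 h1 P1 P2 + Dlt (d0 + d1) * L * R2 h1 h2 P2"

end

theory Submission
  imports Defs
begin

text \<open>Up to the positive factor L/2 and an additive constant, the objective is
  the function gain of the power x spent on the second layer. Its derivative is an affine
  function (\<alpha>1 - \<beta>1) + x (h0 \<alpha>1 - h2 \<beta>1) divided by a positive denominator, so the sign
  pattern of this affine function on [0, Pmax] pins down the unique maximiser: 0 when it is
  negative throughout, Pmax when it is positive throughout, and otherwise its root r1,
  clipped at Pmax.\<close>

lemma argmax_eq_of_deriv_sign:
  fixes f f' :: "real \<Rightarrow> real"
  assumes deriv: "\<And>x. a \<le> x \<Longrightarrow> x \<le> b \<Longrightarrow> (f has_real_derivative f' x) (at x)"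
    and up: "\<And>x. a < x \<Longrightarrow> x < m \<Longrightarrow> 0 < f' x"
    and down: "\<And>x. m < x \<Longrightarrow> x < b \<Longrightarrow> f' x < 0"
    and m: "a \<le> m" "m \<le> b"
    and p: "a \<le> p" "p \<le> b"
    and max: "\<And>x. a \<le> x \<Longrightarrow> x \<le> b \<Longrightarrow> f x \<le> f p"
  shows "p = m"
proof -
  have cont: "continuous_on {u..v} f" if "a \<le> u" "v \<le> b" for u v
    by (rule DERIV_atLeastAtMost_imp_continuous_on) (meson deriv order_trans that)
  consider "p < m" | "m < p" | "p = m" by linarith
  then show ?thesis
  proof cases
    case 1
    have "f p < f m"
    proof (rule DERIV_pos_imp_increasing_open[OF 1 _ cont])
      show "\<exists>y. (f has_real_derivative y) (at x) \<and> 0 < y" if "p < x" "x < m" for x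
        using deriv[of x] up[of x] that p m by auto
    qed (use p m in auto)
    with max[OF m] show ?thesis by simp
  next
    case 2
    have "f p < f m"
    proof (rule DERIV_neg_imp_decreasing_open[OF 2 _ cont])
      show "\<exists>y. (f has_real_derivative y) (at x) \<and> y < 0" if "m < x" "x < p" for x
        using deriv[of x] down[of x] that p m by auto
    qed (use p m in auto)
    with max[OF m] show ?thesis by simp
  qed
qed

lemma Dlt_nonneg: "0 \<le> \<theta> \<Longrightarrow> \<theta> \<le> 1 \<Longrightarrow> 0 \<le> Dlt \<theta>"
  unfolding Dlt_def by simp

definition gain :: "real \<Rightarrow> real \<Rightarrow> real \<Rightarrow> real \<Rightarrow> real \<Rightarrow> real \<Rightarrow> real" where
  "gain h0 h1 h2 D1 D2 x =
     D1 * (ln (1 + h0 * x) - ln (1 + h1 * x)) + D2 * (ln (1 + h2 * x) - ln (1 + h1 * x))"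

lemma objP_eq_gain:
  assumes "0 \<le> h0" "0 \<le> h1" "0 \<le> h2" "0 \<le> x" "x \<le> Pmax"
  shows "objP L h0 h1 h2 d0 d1 (Pmax - x) x =
     L / 2 * (Dlt d0 * (ln (1 + h1 * Pmax) - ln (1 + h0 * Pmax)))
       + L / 2 * gain h0 h1 h2 (Dlt d0) (Dlt (d0 + d1)) x"
proof -
  have x: "1 + h0 * x > 0" "1 + h1 * x > 0" "1 + h2 * x > 0"
    using assms by (simp_all add: add_pos_nonneg)
  have Pmax: "1 + h0 * Pmax > 0" "1 + h1 * Pmax > 0"
    using assms by (simp_all add: add_pos_nonneg)
  have "1 + h * (Pmax - x) / (1 + h * x) = (1 + h * Pmax) / (1 + h * x)"
    if "1 + h * x > 0" for h
    using that by (simp add: field_simps)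
  with x have "1 + h1 * (Pmax - x) / (1 + h1 * x) = (1 + h1 * Pmax) / (1 + h1 * x)"
    "1 + h0 * (Pmax - x) / (1 + h0 * x) = (1 + h0 * Pmax) / (1 + h0 * x)"
    by blast+
  then show ?thesis
    unfolding objP_def R1_def R2_def gain_def using x Pmax
    by (simp add: ln_div algebra_simps)
qed

lemma gain_has_real_derivative:
  assumes "0 \<le> h0" "0 \<le> h1" "0 \<le> h2" "0 \<le> x"
  shows "(gain h0 h1 h2 D1 D2 has_real_derivative
    ((h2 - h1) * D2 - (h1 - h0) * D1 + x * (h0 * ((h2 - h1) * D2) - h2 * ((h1 - h0) * D1)))
      / ((1 + h0 * x) * (1 + h1 * x) * (1 + h2 * x))) (at x)"
proof -
  have x: "1 + h0 * x > 0" "1 + h1 * x > 0" "1 + h2 * x > 0"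
    using assms by (simp_all add: add_pos_nonneg)
  have "(gain h0 h1 h2 D1 D2 has_real_derivative
      D1 * (h0 / (1 + h0 * x) - h1 / (1 + h1 * x)) + D2 * (h2 / (1 + h2 * x) - h1 / (1 + h1 * x)))
      (at x)"
    unfolding gain_def[abs_def] using x by (auto intro!: derivative_eq_intros)
  also have "D1 * (h0 / (1 + h0 * x) - h1 / (1 + h1 * x))
      + D2 * (h2 / (1 + h2 * x) - h1 / (1 + h1 * x)) =
    ((h2 - h1) * D2 - (h1 - h0) * D1 + x * (h0 * ((h2 - h1) * D2) - h2 * ((h1 - h0) * D1)))
      / ((1 + h0 * x) * (1 + h1 * x) * (1 + h2 * x))"
    using x by (simp add: divide_simps) (simp add: algebra_simps)
  finally show ?thesis .
qed

context
  fixes h0 h1 h2 D1 D2 \<alpha> \<beta> Pmax p :: real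
  assumes h: "0 < h0" "h0 < h1" "h1 < h2"
    and D: "0 \<le> D1" "0 \<le> D2"
    and \<alpha>: "\<alpha> = (h2 - h1) * D2" and \<beta>: "\<beta> = (h1 - h0) * D1"
    and p: "0 \<le> p" "p \<le> Pmax"
    and max: "\<And>x. 0 \<le> x \<Longrightarrow> x \<le> Pmax \<Longrightarrow> gain h0 h1 h2 D1 D2 x \<le> gain h0 h1 h2 D1 D2 p"
begin

private lemma argmax_eq:
  assumes "0 \<le> m" "m \<le> Pmax"
    and "\<And>x. 0 < x \<Longrightarrow> x < m \<Longrightarrow> 0 < \<alpha> - \<beta> + x * (h0 * \<alpha> - h2 * \<beta>)"
    and "\<And>x. m < x \<Longrightarrow> x < Pmax \<Longrightarrow> \<alpha> - \<beta> + x * (h0 * \<alpha> - h2 * \<beta>) < 0"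
  shows "p = m"
proof -
  let ?N = "\<lambda>x. \<alpha> - \<beta> + x * (h0 * \<alpha> - h2 * \<beta>)"
  let ?den = "\<lambda>x::real. (1 + h0 * x) * (1 + h1 * x) * (1 + h2 * x)"
  have h_nonneg: "0 \<le> h0" "0 \<le> h1" "0 \<le> h2" using h by linarith+
  have den: "0 < ?den x" if "0 \<le> x" for x
    using h_nonneg that by (simp add: add_pos_nonneg)
  show ?thesis
  proof (rule argmax_eq_of_deriv_sign[where f = "gain h0 h1 h2 D1 D2" and f' = "\<lambda>x. ?N x / ?den x",
        OF _ _ _ assms(1,2) p max])
    show "(gain h0 h1 h2 D1 D2 has_real_derivative ?N x / ?den x) (at x)" if "0 \<le> x" for x
      using gain_has_real_derivative[OF h_nonneg that] unfolding \<alpha> \<beta> .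
    show "0 < ?N x / ?den x" if "0 < x" "x < m" for x
      using assms(3)[OF that] den[of x] that by simp
    show "?N x / ?den x < 0" if "m < x" "x < Pmax" for x
      using assms(4)[OF that] den[of x] that assms(1) by (simp add: divide_neg_pos)
  qed
qed

private lemma weights_nonneg: "0 \<le> \<alpha>" "0 \<le> \<beta>"
  using h D by (simp_all add: \<alpha> \<beta>)

lemma gain_argmax_eq_0:
  assumes "\<alpha> < \<beta>"
  shows "p = 0"
proof (rule argmax_eq)
  have "h0 * \<alpha> \<le> h2 * \<beta>"
    using assms weights_nonneg h by (intro mult_mono) auto
  then have "x * (h0 * \<alpha> - h2 * \<beta>) \<le> 0" if "0 < x" for x
    using that by (intro mult_nonneg_nonpos) auto
  then show "\<alpha> - \<beta> + x * (h0 * \<alpha> - h2 * \<beta>) < 0" if "0 < x" for x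
    using assms that by fastforce
qed (use p in auto)

lemma gain_argmax_eq_Pmax:
  assumes "h2 * \<beta> < h0 * \<alpha>"
  shows "p = Pmax"
proof (rule argmax_eq)
  have "h0 * \<beta> < h0 * \<alpha>"
    using assms weights_nonneg h mult_right_mono[of h0 h2 \<beta>] by linarith
  then have "\<beta> < \<alpha>" using h by simp
  then show "0 < \<alpha> - \<beta> + x * (h0 * \<alpha> - h2 * \<beta>)" if "0 < x" for x
    using assms that by (simp add: add_pos_nonneg)
qed (use p in auto)

lemma gain_argmax_eq_root:
  assumes "\<beta> < \<alpha>" "h0 * \<alpha> < h2 * \<beta>"
  shows "p = min ((\<alpha> - \<beta>) / (h2 * \<beta> - h0 * \<alpha>)) Pmax"
proof (rule argmax_eq)
  let ?r = "(\<alpha> - \<beta>) / (h2 * \<beta> - h0 * \<alpha>)"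
  show "0 < \<alpha> - \<beta> + x * (h0 * \<alpha> - h2 * \<beta>)" if "x < min ?r Pmax" for x
    using that assms(2) by (simp add: pos_less_divide_eq algebra_simps)
  show "\<alpha> - \<beta> + x * (h0 * \<alpha> - h2 * \<beta>) < 0" if "min ?r Pmax < x" "x < Pmax" for x
  proof -
    from that have "?r < x" by linarith
    with assms(2) show ?thesis by (simp add: pos_divide_less_eq algebra_simps)
  qed
qed (use assms p in auto)

end

theorem lemma2:
  fixes Pmax L h0 h1 h2 d0 d1 d2 P2 :: real
  assumes "Pmax > 0" and "L > 0"
    and "0 < h0" and "h0 < h1" and "h1 < h2"
    and "d0 \<ge> 0" and "d1 \<ge> 0" and "d2 \<ge> 0" and "d0 + d1 + d2 = 1"
    and opt_feas: "0 \<le> P2" "P2 \<le> Pmax"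
    and opt_max: "\<forall>x. 0 \<le> x \<and> x \<le> Pmax \<longrightarrow>
        objP L h0 h1 h2 d0 d1 (Pmax - x) x \<le> objP L h0 h1 h2 d0 d1 (Pmax - P2) P2"
  defines "\<alpha>1 \<equiv> (h2 - h1) * Dlt (d0 + d1)"
    and "\<beta>1 \<equiv> (h1 - h0) * Dlt d0"
  shows "(\<alpha>1 < \<beta>1 \<longrightarrow> Pmax - P2 = Pmax \<and> P2 = 0)
       \<and> (h2 * \<beta>1 < h0 * \<alpha>1 \<longrightarrow> P2 = Pmax)
       \<and> (\<alpha>1 > \<beta>1 \<and> h2 * \<beta>1 > h0 * \<alpha>1 \<longrightarrow>
            P2 = min ((\<alpha>1 - \<beta>1) / (h2 * \<beta>1 - h0 * \<alpha>1)) Pmax)"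
proof -
  have h: "0 \<le> h0" "0 \<le> h1" "0 \<le> h2" using assms(3-5) by linarith+
  have D: "0 \<le> Dlt d0" "0 \<le> Dlt (d0 + d1)"
    using assms(6-9) by (simp_all add: Dlt_nonneg)
  have max: "gain h0 h1 h2 (Dlt d0) (Dlt (d0 + d1)) x \<le> gain h0 h1 h2 (Dlt d0) (Dlt (d0 + d1)) P2"
    if "0 \<le> x" "x \<le> Pmax" for x
  proof -
    from opt_max that have "objP L h0 h1 h2 d0 d1 (Pmax - x) x \<le> objP L h0 h1 h2 d0 d1 (Pmax - P2) P2"
      by blast
    with assms(2) show ?thesis by (simp add: objP_eq_gain[OF h that] objP_eq_gain[OF h opt_feas])
  qed
  note argmax = assms(3-5) D \<alpha>1_def[THEN meta_eq_to_obj_eq] \<beta>1_def[THEN meta_eq_to_obj_eq] opt_feas max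
  show ?thesis
    using gain_argmax_eq_0[OF argmax] gain_argmax_eq_Pmax[OF argmax] gain_argmax_eq_root[OF argmax]
    by auto
qed

end
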